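(* Let $p>1$, $h\in C[0,\infty)$ and $h(s)>0$ for $s>0$. Assume that $h$ is bounded on $[0,\infty)$ and satisfies \[ \lim_{t\to\infty}t^{-(p+1)/2} \int_0^t s^{p+1} h(s)\, ds = \infty. \] Let $\{w_c\}_{c>0}$ be a family of least energy solutions to the problem \[ w'' + h(s)|w|^{p-1} w = 0 \ (0<s<c), \quad w(0)=w(c)=0, \quad w(s)>0 \ (0<s<c). \] Then $w_c'(0)\to0$ as $c\to\infty$.
   Context: For $c>0$, the Rayleigh quotient is $R(w)= \int_0^c |w'(s)|^2 ds \,/\, \left(\int_0^c h(s) |w(s)|^{p+1} ds \right)^{2/(p+1)}$ and the energy is $E(c) = \inf_{w \in H^1_0(0,c),\,w\not\equiv 0} R(w)$. A least energy solution $w_c$ is a solution of the boundary value problem $w'' + h(s)|w|^{p-1} w = 0$ on $(0,c)$, $w(0)=w(c)=0$, $w>0$ on $(0,c)$, satisfying $R(w_c)=E(c)$; such a solution exists for every $c>0$. *)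

theory Defs
  imports "HOL-Analysis.Analysis"
begin

text \<open>Elements of H^1_0(0,c) in one dimension: w is the primitive of a square
integrable weak derivative g on [0,c], with w(0) = 0 and w(c) = 0.\<close>
definition H10 :: "real \<Rightarrow> (real \<Rightarrow> real) \<Rightarrow> (real \<Rightarrow> real) \<Rightarrow> bool" where
  "H10 c w g \<longleftrightarrow> g integrable_on {0..c} \<and> (\<lambda>s. (g s)\<^sup>2) integrable_on {0..c}
     \<and> (\<forall>x\<in>{0..c}. w x = integral {0..x} g) \<and> w c = 0"

definition rayleigh :: "(real \<Rightarrow> real) \<Rightarrow> real \<Rightarrow> real \<Rightarrow> (real \<Rightarrow> real) \<Rightarrow> (real \<Rightarrow> real) \<Rightarrow> real" where
  "rayleigh h p c w g = integral {0..c} (\<lambda>s. (g s)\<^sup>2)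
     / (integral {0..c} (\<lambda>s. h s * \<bar>w s\<bar> powr (p + 1))) powr (2 / (p + 1))"

definition energy :: "(real \<Rightarrow> real) \<Rightarrow> real \<Rightarrow> real \<Rightarrow> real" where
  "energy h p c = Inf {rayleigh h p c w g | w g. H10 c w g \<and> (\<exists>s\<in>{0..c}. w s \<noteq> 0)}"

definition least_energy_sol :: "(real \<Rightarrow> real) \<Rightarrow> real \<Rightarrow> real \<Rightarrow> (real \<Rightarrow> real) \<Rightarrow> bool" where
  "least_energy_sol h p c w \<longleftrightarrow>
     continuous_on {0..c} w \<and> w 0 = 0 \<and> w c = 0 \<and> (\<forall>s\<in>{0<..<c}. w s > 0)
     \<and> (\<forall>s\<in>{0<..<c}. w differentiable (at s)
          \<and> (deriv w has_real_derivative - (h s * \<bar>w s\<bar> powr (p - 1) * w s)) (at s))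
     \<and> H10 c w (deriv w)
     \<and> rayleigh h p c w (deriv w) = energy h p c"

end

theory Submission
  imports Defs
begin

text \<open>Write a = w'(0) and A = \<integral> w'^2 for the least energy solution w on (0,c).
Multiplying the equation by w gives A = \<integral> h w^(p+1), so E(c) = A^((p-1)/(p+1)).
The test function 2s(c - s)/c dominates s on [0, c/2], whence
E(c) \<le> (4c/3) (\<integral>_0^(c/2) s^(p+1) h)^(-2/(p+1)), which tends to 0 by the growth
hypothesis; hence A \<rightarrow> 0. Conversely w is concave, so w(s) \<le> a s and, if h \<le> M,
w'' \<ge> -M (a \<delta>)^p on [0, \<delta>]. For \<delta> = \<theta>/a with M \<theta>^(p+1) \<le> a^2/2 this keeps
w' \<ge> a/2 on [0, \<delta>], so A \<ge> a \<theta>/4: a slope a \<ge> \<epsilon> would keep A away from 0.\<close>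

lemma powr_times_self: "0 \<le> (x::real) \<Longrightarrow> x powr q * x = x powr (q + 1)"
  by (cases "x = 0") (auto simp: powr_add)

lemma integral_square_ge:
  fixes G :: "real \<Rightarrow> real"
  assumes G: "continuous_on {a..b} G" and d: "a \<le> d" "d \<le> b"
    and ge: "\<And>s. s \<in> {a..d} \<Longrightarrow> \<beta> \<le> G s" and "0 \<le> \<beta>"
  shows "\<beta>\<^sup>2 * (d - a) \<le> integral {a..b} (\<lambda>s. (G s)\<^sup>2)"
proof -
  have G2: "continuous_on {a..b} (\<lambda>s. (G s)\<^sup>2)" by (intro continuous_intros G)
  then have int: "(\<lambda>s. (G s)\<^sup>2) integrable_on {x..y}" if "a \<le> x" "y \<le> b" for x y
    by (rule integrable_continuous_interval[OF continuous_on_subset]) (use that in auto)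
  have "\<beta>\<^sup>2 * (d - a) = integral {a..d} (\<lambda>_. \<beta>\<^sup>2)" using d by simp
  also have "\<dots> \<le> integral {a..d} (\<lambda>s. (G s)\<^sup>2)"
    using d ge \<open>0 \<le> \<beta>\<close> by (intro integral_le int power_mono) auto
  also have "\<dots> \<le> integral {a..d} (\<lambda>s. (G s)\<^sup>2) + integral {d..b} (\<lambda>s. (G s)\<^sup>2)"
    using d by (intro add_increasing2 integral_nonneg int) auto
  also have "\<dots> = integral {a..b} (\<lambda>s. (G s)\<^sup>2)"
    using d by (intro Henstock_Kurzweil_Integration.integral_combine int) auto
  finally show ?thesis .
qed

locale least_energy_solution =
  fixes h :: "real \<Rightarrow> real" and p c :: real and w :: "real \<Rightarrow> real"
  assumes p_gt_1: "1 < p" and c_pos: "0 < c"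
    and h_cont: "continuous_on {0..c} h"
    and h_nonneg: "\<And>s. s \<in> {0<..<c} \<Longrightarrow> 0 \<le> h s"
    and sol: "least_energy_sol h p c w"
begin

lemma w_cont: "continuous_on {0..c} w"
  and w_0: "w 0 = 0" and w_c: "w c = 0"
  and w_pos: "s \<in> {0<..<c} \<Longrightarrow> 0 < w s"
  and w_differentiable: "s \<in> {0<..<c} \<Longrightarrow> w differentiable (at s)"
  and deriv_has_derivative:
    "s \<in> {0<..<c} \<Longrightarrow> (deriv w has_real_derivative - (h s * \<bar>w s\<bar> powr (p - 1) * w s)) (at s)"
  and w_H10: "H10 c w (deriv w)"
  using sol unfolding least_energy_sol_def by auto

lemma w_nonneg: "s \<in> {0..c} \<Longrightarrow> 0 \<le> w s"
  using w_pos[of s] w_0 w_c by (cases "s = 0 \<or> s = c") (auto simp: less_le)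

definition force :: "real \<Rightarrow> real" where
  "force s = h s * w s powr p"

lemma force_cont: "continuous_on {0..c} force"
  unfolding force_def using p_gt_1 w_nonneg
  by (intro continuous_intros h_cont continuous_on_powr' w_cont) auto

lemma force_integrable: "x \<le> c \<Longrightarrow> force integrable_on {0..x}"
  by (rule integrable_continuous_interval[OF continuous_on_subset[OF force_cont]]) auto

lemma force_nonneg: "s \<in> {0..c} \<Longrightarrow> 0 \<le> force s"
  using w_0 w_c h_nonneg[of s] unfolding force_def by (cases "s = 0 \<or> s = c") auto

lemma w_times_force: "s \<in> {0..c} \<Longrightarrow> w s * force s = h s * \<bar>w s\<bar> powr (p + 1)"
  using w_nonneg[of s] powr_times_self[of "w s" p] unfolding force_def by (simp add: algebra_simps)

lemma deriv_has_derivative_force: "s \<in> {0<..<c} \<Longrightarrow> (deriv w has_real_derivative - force s) (at s)"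
  using deriv_has_derivative[of s] w_nonneg[of s] powr_times_self[of "w s" "p - 1"]
  unfolding force_def by (simp add: mult.assoc)

text \<open>The derivative of w, extended continuously to the closed interval.\<close>
definition slope :: "real \<Rightarrow> real" where
  "slope x = deriv w (c/2) + integral {0..c/2} force - integral {0..x} force"

lemma slope_has_derivative:
  assumes "x \<in> {0..c}" shows "(slope has_real_derivative - force x) (at x within {0..c})"
proof -
  have "((\<lambda>u. integral {0..u} force) has_real_derivative force x) (at x within {0..c})"
    using integral_has_vector_derivative[OF force_cont assms]
    by (simp add: has_real_derivative_iff_has_vector_derivative)
  then show ?thesis
    using DERIV_diff[OF DERIV_const] unfolding slope_def by fastforce
qed

lemma slope_cont: "continuous_on {0..c} slope"
  using slope_has_derivative by (rule DERIV_continuous_on)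

lemma deriv_eq_slope:
  assumes "x \<in> {0<..<c}" shows "deriv w x = slope x"
proof -
  have "deriv w x - slope x = deriv w (c/2) - slope (c/2)"
  proof (rule DERIV_isconst3[of 0 c x "c/2" "\<lambda>s. deriv w s - slope s"])
    fix y assume y: "y \<in> {0<..<c}"
    then have "(slope has_real_derivative - force y) (at y)"
      using slope_has_derivative[of y] at_within_Icc_at[of 0 y c] by auto
    from DERIV_diff[OF deriv_has_derivative_force[OF y] this]
    show "((\<lambda>s. deriv w s - slope s) has_real_derivative 0) (at y)" by simp
  qed (use c_pos assms in auto)
  then show ?thesis unfolding slope_def by simp
qed

lemma w_eq_integral_slope:
  assumes "x \<in> {0..c}" shows "w x = integral {0..x} slope"
proof -
  have "w x = integral {0..x} (deriv w)" using w_H10 assms unfolding H10_def by auto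
  also have "\<dots> = integral {0..x} slope"
    by (rule integral_spike[of "{0,c}"]) (use assms deriv_eq_slope in auto)
  finally show ?thesis .
qed

lemma has_derivative_at_0: "(w has_real_derivative slope 0) (at 0 within {0..c})"
proof -
  have "((\<lambda>u. integral {0..u} slope) has_real_derivative slope 0) (at 0 within {0..c})"
    using integral_has_vector_derivative[OF slope_cont, of 0] c_pos
    by (simp add: has_real_derivative_iff_has_vector_derivative)
  then show ?thesis
    by (rule has_field_derivative_transform_within[where d=1])
       (use c_pos w_eq_integral_slope in auto)
qed

lemma slope_eq: "x \<in> {0..c} \<Longrightarrow> slope x = slope 0 - integral {0..x} force"
  unfolding slope_def by simp

lemma slope_le_slope_0: "x \<in> {0..c} \<Longrightarrow> slope x \<le> slope 0"
  using slope_eq[of x] force_integrable[of x] force_nonneg by (auto intro!: integral_nonneg)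

lemma w_le_linear:
  assumes x: "x \<in> {0..c}" shows "w x \<le> slope 0 * x"
proof -
  have "integral {0..x} slope \<le> integral {0..x} (\<lambda>_. slope 0)"
    using x slope_le_slope_0
    by (intro integral_le integrable_continuous_interval[OF continuous_on_subset[OF slope_cont]]) auto
  then show ?thesis using w_eq_integral_slope[OF x] x by (simp add: mult.commute)
qed

lemma slope_0_pos: "0 < slope 0"
proof -
  have "0 < w (c/2)" using w_pos c_pos by auto
  also have "\<dots> \<le> slope 0 * (c/2)" using w_le_linear[of "c/2"] c_pos by auto
  finally show ?thesis using c_pos by (simp add: zero_less_mult_iff)
qed

lemma dirichlet_eq_integral_slope:
  "integral {0..c} (\<lambda>s. (deriv w s)\<^sup>2) = integral {0..c} (\<lambda>s. (slope s)\<^sup>2)"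
  by (rule integral_spike[of "{0,c}"]) (use deriv_eq_slope in auto)

text \<open>Multiply the equation by w and integrate by parts.\<close>
lemma dirichlet_eq_potential:
  "integral {0..c} (\<lambda>s. (deriv w s)\<^sup>2) = integral {0..c} (\<lambda>s. h s * \<bar>w s\<bar> powr (p + 1))"
proof -
  have "((\<lambda>x. (slope x)\<^sup>2 - w x * force x) has_integral w c * slope c - w 0 * slope 0) {0..c}"
  proof (rule fundamental_theorem_of_calculus_interior)
    fix x assume x: "x \<in> {0<..<c}"
    have "(w has_real_derivative slope x) (at x)"
      using w_differentiable[OF x] deriv_eq_slope[OF x] DERIV_deriv_iff_real_differentiable by metis
    moreover have "(slope has_real_derivative - force x) (at x)"
      using slope_has_derivative[of x] at_within_Icc_at[of 0 x c] x by auto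
    ultimately have "((\<lambda>x. w x * slope x) has_real_derivative (slope x)\<^sup>2 - w x * force x) (at x)"
      by (auto intro!: derivative_eq_intros simp: power2_eq_square)
    then show "((\<lambda>x. w x * slope x) has_vector_derivative (slope x)\<^sup>2 - w x * force x) (at x)"
      by (simp add: has_real_derivative_iff_has_vector_derivative)
  qed (use c_pos in \<open>auto intro!: continuous_intros w_cont slope_cont\<close>)
  then have "integral {0..c} (\<lambda>x. (slope x)\<^sup>2 - w x * force x) = 0"
    using w_0 w_c by (simp add: integral_unique)
  moreover have "integral {0..c} (\<lambda>x. (slope x)\<^sup>2 - w x * force x)
      = integral {0..c} (\<lambda>x. (slope x)\<^sup>2 - h x * \<bar>w x\<bar> powr (p + 1))"
    by (rule integral_cong) (simp add: w_times_force)
  moreover have "continuous_on {0..c} (\<lambda>x. h x * \<bar>w x\<bar> powr (p + 1))"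
    using p_gt_1 by (intro continuous_intros h_cont continuous_on_powr' w_cont) auto
  ultimately show ?thesis
    unfolding dirichlet_eq_integral_slope
    by (simp add: integral_diff integrable_continuous_interval slope_cont continuous_intros)
qed

lemma dirichlet_eq_energy_powr:
  "integral {0..c} (\<lambda>s. (deriv w s)\<^sup>2) = energy h p c powr ((p + 1) / (p - 1))"
proof -
  define A where "A = integral {0..c} (\<lambda>s. (deriv w s)\<^sup>2)"
  have E: "energy h p c = A / A powr (2 / (p + 1))"
    using sol unfolding least_energy_sol_def rayleigh_def A_def dirichlet_eq_potential by simp
  have "0 \<le> A" unfolding A_def using w_H10 unfolding H10_def by (auto intro: integral_nonneg)
  moreover have "(A powr (1 - 2 / (p + 1))) powr ((p + 1) / (p - 1)) = A" if "0 < A"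
  proof -
    have "1 - 2 / (p + 1) = (p - 1) / (p + 1)" using p_gt_1 by (simp add: field_simps)
    then have "(1 - 2 / (p + 1)) * ((p + 1) / (p - 1)) = 1" using p_gt_1 by simp
    then show ?thesis using that p_gt_1 by (simp add: powr_powr)
  qed
  ultimately show ?thesis
    unfolding A_def[symmetric] E by (cases "A = 0") (auto simp: powr_diff)
qed

lemma dirichlet_lower_bound:
  assumes h_le: "\<And>s. s \<in> {0<..<c} \<Longrightarrow> h s \<le> M" and \<delta>: "0 \<le> \<delta>" "\<delta> \<le> c"
    and small: "M * (slope 0 * \<delta>) powr p * \<delta> \<le> slope 0 / 2"
  shows "(slope 0)\<^sup>2 * \<delta> / 4 \<le> integral {0..c} (\<lambda>s. (deriv w s)\<^sup>2)"
proof -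
  define K where "K = M * (slope 0 * \<delta>) powr p"
  have "0 \<le> M" using h_nonneg[of "c/2"] h_le[of "c/2"] c_pos by auto
  then have "0 \<le> K" unfolding K_def by simp
  have force_le: "force r \<le> K" if r: "r \<in> {0..\<delta>}" for r
  proof (cases "w r = 0")
    case False
    with r \<delta> w_0 w_c have r': "r \<in> {0<..<c}" by (cases "r = 0 \<or> r = c") auto
    have "w r \<le> slope 0 * r" using w_le_linear[of r] r' by auto
    also have "\<dots> \<le> slope 0 * \<delta>" using r slope_0_pos by (intro mult_left_mono) auto
    finally have "w r \<le> slope 0 * \<delta>" .
    then have "w r powr p \<le> (slope 0 * \<delta>) powr p"
      using w_nonneg[of r] r' p_gt_1 by (intro powr_mono2) auto
    then show ?thesis
      unfolding force_def K_def using h_nonneg[OF r'] h_le[OF r'] \<open>0 \<le> M\<close> by (intro mult_mono) auto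
  qed (use \<open>0 \<le> K\<close> in \<open>simp add: force_def\<close>)
  have "slope 0 / 2 \<le> slope s" if s: "s \<in> {0..\<delta>}" for s
  proof -
    have "integral {0..s} force \<le> integral {0..s} (\<lambda>_. K)"
      using s \<delta> force_le by (intro integral_le force_integrable) auto
    also have "\<dots> \<le> K * \<delta>" using s \<open>0 \<le> K\<close> by (simp add: mult.commute mult_left_mono)
    finally show ?thesis using slope_eq[of s] s \<delta> small unfolding K_def by auto
  qed
  then have "(slope 0 / 2)\<^sup>2 * (\<delta> - 0) \<le> integral {0..c} (\<lambda>s. (slope s)\<^sup>2)"
    using \<delta> slope_0_pos by (intro integral_square_ge slope_cont) auto
  then show ?thesis by (simp add: dirichlet_eq_integral_slope power_divide)
qed

text \<open>Test the lower bound with \<delta> = \<theta> / slope 0.\<close>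
lemma slope_0_less:
  assumes h_le: "\<And>s. s \<in> {0<..<c} \<Longrightarrow> h s \<le> M" and "0 < \<epsilon>" "0 < \<theta>" "\<theta> \<le> \<epsilon> * c"
    and small: "M * \<theta> powr (p + 1) \<le> \<epsilon>\<^sup>2 / 2"
    and dirichlet: "integral {0..c} (\<lambda>s. (deriv w s)\<^sup>2) < \<epsilon> * \<theta> / 4"
  shows "slope 0 < \<epsilon>"
proof (rule ccontr)
  define a where "a = slope 0"
  assume "\<not> slope 0 < \<epsilon>"
  then have "\<epsilon> \<le> a" unfolding a_def by simp
  then have "\<epsilon>\<^sup>2 \<le> a\<^sup>2" using \<open>0 < \<epsilon>\<close> by (intro power_mono) auto
  have "\<theta> / a \<le> \<theta> / \<epsilon>" using \<open>\<epsilon> \<le> a\<close> \<open>0 < \<epsilon>\<close> \<open>0 < \<theta>\<close> by (intro divide_left_mono) auto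
  also have "\<dots> \<le> c" using \<open>\<theta> \<le> \<epsilon> * c\<close> \<open>0 < \<epsilon>\<close> by (simp add: field_simps)
  finally have "\<theta> / a \<le> c" .
  have "M * (a * (\<theta> / a)) powr p * (\<theta> / a) = M * \<theta> powr (p + 1) / a"
    using \<open>0 < \<epsilon>\<close> \<open>\<epsilon> \<le> a\<close> \<open>0 < \<theta>\<close> by (simp add: powr_add)
  also have "\<dots> \<le> a\<^sup>2 / 2 / a"
    using small \<open>\<epsilon>\<^sup>2 \<le> a\<^sup>2\<close> \<open>0 < \<epsilon>\<close> \<open>\<epsilon> \<le> a\<close> by (intro divide_right_mono) linarith+
  also have "\<dots> = a / 2" by (simp add: power2_eq_square)
  finally have "a\<^sup>2 * (\<theta> / a) / 4 \<le> integral {0..c} (\<lambda>s. (deriv w s)\<^sup>2)"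
    using dirichlet_lower_bound[OF h_le, of "\<theta> / a"] \<open>\<theta> / a \<le> c\<close> \<open>0 < \<epsilon>\<close> \<open>\<epsilon> \<le> a\<close> \<open>0 < \<theta>\<close>
    unfolding a_def by simp
  moreover have "a\<^sup>2 * (\<theta> / a) / 4 = a * \<theta> / 4"
    using \<open>0 < \<epsilon>\<close> \<open>\<epsilon> \<le> a\<close> by (simp add: power2_eq_square)
  moreover have "\<epsilon> * \<theta> / 4 \<le> a * \<theta> / 4"
    using \<open>\<epsilon> \<le> a\<close> \<open>0 < \<theta>\<close> by (simp add: mult_right_mono)
  ultimately show False using dirichlet by linarith
qed

end

lemma rayleigh_nonneg: "H10 c w g \<Longrightarrow> 0 \<le> rayleigh h p c w g"
  unfolding H10_def rayleigh_def by (auto intro!: divide_nonneg_nonneg integral_nonneg)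

lemma energy_le_rayleigh:
  assumes "H10 c w g" "s \<in> {0..c}" "w s \<noteq> 0"
  shows "energy h p c \<le> rayleigh h p c w g"
  unfolding energy_def
proof (rule cInf_lower)
  show "rayleigh h p c w g \<in> {rayleigh h p c w g |w g. H10 c w g \<and> (\<exists>s\<in>{0..c}. w s \<noteq> 0)}"
    using assms by blast
qed (auto intro!: bdd_belowI[of _ 0] rayleigh_nonneg)

lemma H10_parabola: "0 < c \<Longrightarrow> H10 c (\<lambda>x. 2 * x * (c - x) / c) (\<lambda>x. 2 - 4 * x / c)"
proof -
  assume c: "0 < c"
  have "integral {0..x} (\<lambda>x. 2 - 4 * x / c) = 2 * x * (c - x) / c" if "0 \<le> x" for x
  proof -
    have "((\<lambda>x. 2 - 4 * x / c) has_integral 2 * x * (c - x) / c - 2 * 0 * (c - 0) / c) {0..x}"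
      using that c
      by (intro fundamental_theorem_of_calculus)
         (auto intro!: derivative_eq_intros
           simp: has_real_derivative_iff_has_vector_derivative[symmetric] field_simps)
    then show ?thesis by (simp add: integral_unique)
  qed
  with c show ?thesis
    unfolding H10_def by (auto intro!: integrable_continuous_interval continuous_intros)
qed

lemma energy_nonneg: "0 < c \<Longrightarrow> 0 \<le> energy h p c"
  unfolding energy_def
proof (rule cInf_greatest)
  assume "0 < c"
  then have "2 * (c/2) * (c - c/2) / c \<noteq> 0" "c/2 \<in> {0..c}" by auto
  with H10_parabola[OF \<open>0 < c\<close>]
  show "{rayleigh h p c w g |w g. H10 c w g \<and> (\<exists>s\<in>{0..c}. w s \<noteq> 0)} \<noteq> {}" by blast
qed (auto intro: rayleigh_nonneg)

lemma integral_parabola_deriv_square: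
  "0 < (c::real) \<Longrightarrow> integral {0..c} (\<lambda>x. (2 - 4 * x / c)\<^sup>2) = 4 * c / 3"
proof -
  assume c: "0 < c"
  have "((\<lambda>x. (2 - 4 * x / c)\<^sup>2) has_integral
      (- (c/12) * (2 - 4 * c / c) ^ 3) - (- (c/12) * (2 - 4 * 0 / c) ^ 3)) {0..c}"
    using c
    by (intro fundamental_theorem_of_calculus)
       (auto intro!: derivative_eq_intros simp: has_real_derivative_iff_has_vector_derivative[symmetric]
         field_simps power2_eq_square, algebra)
  then show ?thesis using c by (simp add: integral_unique)
qed

lemma integral_parabola_potential_ge:
  fixes h :: "real \<Rightarrow> real" and p c :: real
  assumes p: "-1 < p" and c: "0 < c"
    and h: "continuous_on {0..c} h" "\<And>s. s \<in> {0<..c} \<Longrightarrow> 0 \<le> h s"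
  shows "integral {0..c/2} (\<lambda>s. s powr (p + 1) * h s)
    \<le> integral {0..c} (\<lambda>s. h s * \<bar>2 * s * (c - s) / c\<bar> powr (p + 1))"
proof -
  define f where "f s = h s * \<bar>2 * s * (c - s) / c\<bar> powr (p + 1)" for s
  have f: "continuous_on {0..c} f"
    unfolding f_def using p c by (intro continuous_intros h continuous_on_powr') auto
  then have f_int: "f integrable_on {x..y}" if "0 \<le> x" "y \<le> c" for x y
    by (rule integrable_continuous_interval[OF continuous_on_subset]) (use that in auto)
  have "integral {0..c/2} (\<lambda>s. s powr (p + 1) * h s) \<le> integral {0..c/2} f"
  proof (rule integral_le)
    show "(\<lambda>s. s powr (p + 1) * h s) integrable_on {0..c/2}"
      using p c
      by (intro integrable_continuous_interval continuous_intros continuous_on_powr'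
          continuous_on_subset[OF h(1)]) auto
    fix s assume s: "s \<in> {0..c/2}"
    then have "0 \<le> s * (c - 2 * s)" by simp
    then have "s \<le> 2 * s * (c - s) / c" using c by (simp add: le_divide_eq algebra_simps)
    then have "s powr (p + 1) \<le> \<bar>2 * s * (c - s) / c\<bar> powr (p + 1)"
      using s p by (intro powr_mono2) auto
    then show "s powr (p + 1) * h s \<le> f s"
      unfolding f_def using h(2)[of s] s c
      by (cases "s = 0") (auto simp: mult.commute intro: mult_left_mono)
  qed (use c f_int in auto)
  also have "\<dots> \<le> integral {0..c/2} f + integral {c/2..c} f"
    using c h(2) unfolding f_def by (intro add_increasing2 integral_nonneg f_int[unfolded f_def]) auto
  also have "\<dots> = integral {0..c} f"
    using c by (intro Henstock_Kurzweil_Integration.integral_combine f_int) auto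
  finally show ?thesis unfolding f_def .
qed

lemma energy_le_parabola:
  fixes h :: "real \<Rightarrow> real" and p c :: real
  defines "I \<equiv> integral {0..c/2} (\<lambda>s. s powr (p + 1) * h s)"
  assumes p: "-1 < p" and c: "0 < c"
    and h: "continuous_on {0..c} h" "\<And>s. s \<in> {0<..c} \<Longrightarrow> 0 \<le> h s" and I: "0 < I"
  shows "energy h p c \<le> 4 * c / 3 / I powr (2 / (p + 1))"
proof -
  define v where "v x = 2 * x * (c - x) / c" for x
  define D where "D = integral {0..c} (\<lambda>s. h s * \<bar>v s\<bar> powr (p + 1))"
  have "I \<le> D"
    unfolding I_def D_def v_def by (rule integral_parabola_potential_ge[OF p c h])
  have "v (c/2) \<noteq> 0" using c by (simp add: v_def)
  then have "energy h p c \<le> rayleigh h p c v (\<lambda>x. 2 - 4 * x / c)"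
    using energy_le_rayleigh[OF H10_parabola[OF c], of "c/2"] c unfolding v_def[abs_def] by simp
  also have "\<dots> = 4 * c / 3 / D powr (2 / (p + 1))"
    unfolding rayleigh_def D_def integral_parabola_deriv_square[OF c] ..
  also have "\<dots> \<le> 4 * c / 3 / I powr (2 / (p + 1))"
    using c I \<open>I \<le> D\<close> p by (intro divide_left_mono powr_mono2 mult_pos_pos) auto
  finally show ?thesis .
qed

lemma energy_tendsto_zero:
  fixes h :: "real \<Rightarrow> real" and p :: real
  defines "F \<equiv> \<lambda>t. t powr (- (p + 1) / 2) * integral {0..t} (\<lambda>s. s powr (p + 1) * h s)"
  assumes p: "-1 < p" and h: "continuous_on {0..} h" "\<And>s. 0 < s \<Longrightarrow> 0 \<le> h s"
    and F: "filterlim F at_top at_top"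
  shows "((\<lambda>c. energy h p c) \<longlongrightarrow> 0) at_top"
proof (rule tendsto_sandwich[where f = "\<lambda>_. 0"])
  have F2: "filterlim (\<lambda>c. F (c/2)) at_top at_top"
    using filterlim_tendsto_pos_mult_at_top[OF tendsto_const[of "1/2"] _ filterlim_ident]
    by (intro filterlim_compose[OF F]) simp
  show "((\<lambda>c. 8/3 * F (c/2) powr (- (2 / (p + 1)))) \<longlongrightarrow> 0) at_top"
    using tendsto_neg_powr[OF _ F2] p by (intro tendsto_mult_right_zero) simp
  show "\<forall>\<^sub>F c in at_top. 0 \<le> energy h p c"
    using eventually_gt_at_top[of 0] by eventually_elim (rule energy_nonneg)
  show "\<forall>\<^sub>F c in at_top. energy h p c \<le> 8/3 * F (c/2) powr (- (2 / (p + 1)))"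
    using eventually_gt_at_top[of 0] F2[unfolded filterlim_at_top_dense, rule_format, of 0]
  proof eventually_elim
    case (elim c)
    define I where "I = integral {0..c/2} (\<lambda>s. s powr (p + 1) * h s)"
    have "0 < I" using elim unfolding F_def I_def by (simp add: zero_less_mult_iff)
    have "energy h p c \<le> 4 * c / 3 / I powr (2 / (p + 1))"
      unfolding I_def
      by (rule energy_le_parabola[OF p \<open>0 < c\<close> continuous_on_subset[OF h(1)] h(2)])
         (use \<open>0 < I\<close> in \<open>auto simp: I_def\<close>)
    also have "\<dots> = 8/3 * (c/2 * I powr (- (2 / (p + 1))))"
      by (simp add: powr_minus_divide)
    also have "c/2 * I powr (- (2 / (p + 1))) = F (c/2) powr (- (2 / (p + 1)))"
    proof -
      have "(- (p + 1) / 2) * (- (2 / (p + 1))) = 1" using p by (simp add: field_simps)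
      then have "((c/2) powr (- (p + 1) / 2)) powr (- (2 / (p + 1))) = c/2"
        using elim by (simp add: powr_powr)
      then show ?thesis unfolding F_def I_def[symmetric] by (simp add: powr_mult)
    qed
    finally show ?case .
  qed
qed (rule tendsto_const)

lemma initial_slope_tendsto_zero:
  fixes h :: "real \<Rightarrow> real" and p M :: real and W :: "real \<Rightarrow> real \<Rightarrow> real"
  assumes sol: "\<And>c. 0 < c \<Longrightarrow> least_energy_solution h p c (W c)"
    and h_le: "\<And>s. 0 < s \<Longrightarrow> h s \<le> M" and "0 < M"
    and dirichlet: "((\<lambda>c. integral {0..c} (\<lambda>s. (deriv (W c) s)\<^sup>2)) \<longlongrightarrow> 0) at_top"
  shows "((\<lambda>c. least_energy_solution.slope h p c (W c) 0) \<longlongrightarrow> 0) at_top"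
proof (rule tendstoI)
  fix \<epsilon> :: real assume "0 < \<epsilon>"
  have p: "1 < p" using sol[of 1] least_energy_solution.p_gt_1 by simp
  define \<theta> where "\<theta> = (\<epsilon>\<^sup>2 / (2 * M)) powr (1 / (p + 1))"
  have "0 < \<theta>" unfolding \<theta>_def using \<open>0 < \<epsilon>\<close> \<open>0 < M\<close> by simp
  have "M * \<theta> powr (p + 1) = \<epsilon>\<^sup>2 / 2"
    unfolding \<theta>_def using p \<open>0 < \<epsilon>\<close> \<open>0 < M\<close> by (simp add: powr_powr)
  have "\<forall>\<^sub>F c in at_top. integral {0..c} (\<lambda>s. (deriv (W c) s)\<^sup>2) < \<epsilon> * \<theta> / 4"
    by (rule order_tendstoD(2)[OF dirichlet]) (use \<open>0 < \<epsilon>\<close> \<open>0 < \<theta>\<close> in simp)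
  moreover have "\<forall>\<^sub>F c in at_top. \<theta> / \<epsilon> \<le> c \<and> 0 < c"
    using eventually_ge_at_top eventually_gt_at_top by (rule eventually_conj)
  ultimately show "\<forall>\<^sub>F c in at_top. dist (least_energy_solution.slope h p c (W c) 0) 0 < \<epsilon>"
  proof eventually_elim
    case (elim c)
    then have "\<theta> \<le> \<epsilon> * c" using \<open>0 < \<epsilon>\<close> by (simp add: field_simps)
    with elim have "least_energy_solution.slope h p c (W c) 0 < \<epsilon>"
      using \<open>0 < \<epsilon>\<close> \<open>0 < \<theta>\<close> \<open>M * \<theta> powr (p + 1) = \<epsilon>\<^sup>2 / 2\<close>
      by (intro least_energy_solution.slope_0_less[OF sol, of c M \<epsilon> \<theta>] h_le) auto
    then show ?case using least_energy_solution.slope_0_pos[OF sol, of c] elim by simp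
  qed
qed

theorem lemma2p4:
  fixes h :: "real \<Rightarrow> real" and p :: real and W :: "real \<Rightarrow> real \<Rightarrow> real"
  assumes "p > 1"
    and "continuous_on {0..} h"
    and "\<forall>s>0. h s > 0"
    and "bounded (h ` {0..})"
    and "filterlim (\<lambda>t. t powr (- (p + 1) / 2) * integral {0..t} (\<lambda>s. s powr (p + 1) * h s))
           at_top at_top"
    and "\<forall>c>0. least_energy_sol h p c (W c)"
  shows "\<exists>d. (\<forall>c>0. (W c has_real_derivative d c) (at 0 within {0..c}))
             \<and> (d \<longlongrightarrow> 0) at_top"
proof -
  have sol: "least_energy_solution h p c (W c)" if "0 < c" for c
    using that assms(1-3,6) by unfold_locales (auto intro: continuous_on_subset less_imp_le)
  obtain M where "0 < M" and M_bound: "\<forall>x\<in>h ` {0..}. norm x \<le> M"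
    using assms(4) unfolding bounded_pos by blast
  then have M: "h s \<le> M" if "0 < s" for s
    using M_bound that by (auto dest!: bspec[of _ _ s] abs_le_D1)
  have "((\<lambda>c. energy h p c) \<longlongrightarrow> 0) at_top"
    using assms(1,3) by (intro energy_tendsto_zero[OF _ assms(2) _ assms(5)]) auto
  moreover have "\<forall>\<^sub>F c in at_top. 0 \<le> energy h p c"
    using eventually_gt_at_top[of 0] by eventually_elim (rule energy_nonneg)
  ultimately have "((\<lambda>c. energy h p c powr ((p + 1) / (p - 1))) \<longlongrightarrow> 0) at_top"
    using assms(1) by (intro tendsto_zero_powrI tendsto_const) auto
  then have dirichlet: "((\<lambda>c. integral {0..c} (\<lambda>s. (deriv (W c) s)\<^sup>2)) \<longlongrightarrow> 0) at_top"
    by (rule Lim_transform_eventually)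
       (use eventually_gt_at_top[of 0] in \<open>eventually_elim,
          simp add: least_energy_solution.dirichlet_eq_energy_powr[OF sol]\<close>)
  show ?thesis
    using initial_slope_tendsto_zero[OF sol M \<open>0 < M\<close> dirichlet]
      least_energy_solution.has_derivative_at_0[OF sol]
    by (intro exI[of _ "\<lambda>c. least_energy_solution.slope h p c (W c) 0"]) auto
qed

end
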